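(* Let $G$ be a graph with $n\ge 2$ vertices that is both connected and co-connected. Then every connecting hypergraph $H$ of $G$ satisfies $\mathrm{cost}(H)\ge \frac{2(n-1)}{3}$.
   Context: All graphs are finite, simple and undirected. $G[X]$ denotes the subgraph induced by $X\subseteq V(G)$. The complement $\bar G$ has vertex set $V(G)$ and an edge $xy$ ($x\neq y$) iff $xy\notin E(G)$; $G$ is co-connected if $\bar G$ is connected. A connecting hypergraph of $G$ is a set $H$ of subsets of $V(G)$ such that every $E\in H$ satisfies $|E|\ge 2$ and $G[E]$ is connected, and for every pair of distinct non-adjacent vertices $u,v$ of $G$ there exists $E\in H$ with $u,v\in E$. Its cost is $\mathrm{cost}(H)=\sum_{E\in H}(|E|-2)$. *)

theory Defs
  imports Main
begin

definition simple_graph :: "'a set \<Rightarrow> ('a \<Rightarrow> 'a \<Rightarrow> bool) \<Rightarrow> bool" where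
  "simple_graph V E \<longleftrightarrow> finite V \<and> (\<forall>x y. E x y \<longrightarrow> x \<in> V \<and> y \<in> V)
     \<and> (\<forall>x y. E x y \<longrightarrow> E y x) \<and> (\<forall>x. \<not> E x x)"

definition induced_connected :: "('a \<Rightarrow> 'a \<Rightarrow> bool) \<Rightarrow> 'a set \<Rightarrow> bool" where
  "induced_connected E X \<longleftrightarrow> X \<noteq> {} \<and>
     (\<forall>u\<in>X. \<forall>v\<in>X. (\<lambda>x y. x \<in> X \<and> y \<in> X \<and> E x y)\<^sup>*\<^sup>* u v)"

definition connected_graph :: "'a set \<Rightarrow> ('a \<Rightarrow> 'a \<Rightarrow> bool) \<Rightarrow> bool" where
  "connected_graph V E \<longleftrightarrow> induced_connected E V"

definition compl_adj :: "'a set \<Rightarrow> ('a \<Rightarrow> 'a \<Rightarrow> bool) \<Rightarrow> 'a \<Rightarrow> 'a \<Rightarrow> bool" where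
  "compl_adj V E x y \<longleftrightarrow> x \<in> V \<and> y \<in> V \<and> x \<noteq> y \<and> \<not> E x y"

definition co_connected :: "'a set \<Rightarrow> ('a \<Rightarrow> 'a \<Rightarrow> bool) \<Rightarrow> bool" where
  "co_connected V E \<longleftrightarrow> connected_graph V (compl_adj V E)"

definition connecting_hypergraph :: "'a set \<Rightarrow> ('a \<Rightarrow> 'a \<Rightarrow> bool) \<Rightarrow> 'a set set \<Rightarrow> bool" where
  "connecting_hypergraph V E H \<longleftrightarrow>
     (\<forall>X\<in>H. X \<subseteq> V \<and> card X \<ge> 2 \<and> induced_connected E X) \<and>
     (\<forall>u\<in>V. \<forall>v\<in>V. u \<noteq> v \<and> \<not> E u v \<longrightarrow> (\<exists>X\<in>H. u \<in> X \<and> v \<in> X))"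

definition hcost :: "'a set set \<Rightarrow> int" where
  "hcost H = (\<Sum>X\<in>H. int (card X) - 2)"

end

theory Submission
  imports Defs
begin

text \<open>Shrink every hyperedge X of size 2 or 3 to the vertices of X having a non-neighbour in X;
  since G[X] is connected, this removes at least one vertex.  Every non-edge of G still lies in a
  shrunk hyperedge, so co-connectivity makes the shrunk hypergraph connected on all of V, and a
  connected hypergraph on n vertices satisfies \<open>\<Sum>(|Y| - 1) \<ge> n - 1\<close>.  Finally
  \<open>2(|Y| - 1) \<le> 3(|X| - 2)\<close> holds for each hyperedge X and its shrinking Y: for
  \<open>|X| \<ge> 4\<close> with Y = X, and for \<open>|X| \<in> {2, 3}\<close> because \<open>|Y| < |X|\<close>.\<close>

definition hyper_adj :: "'a set set \<Rightarrow> 'a \<Rightarrow> 'a \<Rightarrow> bool" where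
  "hyper_adj F x y \<longleftrightarrow> (\<exists>X\<in>F. x \<in> X \<and> y \<in> X)"

definition hyper_connected :: "'a set set \<Rightarrow> bool" where
  "hyper_connected F \<longleftrightarrow> (\<forall>u\<in>\<Union>F. \<forall>v\<in>\<Union>F. (hyper_adj F)\<^sup>*\<^sup>* u v)"

lemma rtranclp_map:
  assumes "r\<^sup>*\<^sup>* u v" and "\<And>x y. r x y \<Longrightarrow> s (f x) (f y)"
  shows "s\<^sup>*\<^sup>* (f u) (f v)"
  using assms(1) by induction (simp_all add: assms(2) rtranclp.rtrancl_into_rtrancl)

lemma hyper_connected_image:
  assumes "hyper_connected F"
  shows "hyper_connected ((`) f ` F)"
  unfolding hyper_connected_def
proof (intro ballI)
  fix u v assume "u \<in> \<Union>((`) f ` F)" "v \<in> \<Union>((`) f ` F)"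
  then obtain u0 v0 where "u0 \<in> \<Union>F" "v0 \<in> \<Union>F" "u = f u0" "v = f v0" by auto
  moreover have "(hyper_adj F)\<^sup>*\<^sup>* u0 v0"
    using assms \<open>u0 \<in> \<Union>F\<close> \<open>v0 \<in> \<Union>F\<close> by (auto simp: hyper_connected_def)
  moreover have "hyper_adj ((`) f ` F) (f x) (f y)" if "hyper_adj F x y" for x y
    using that by (fastforce simp: hyper_adj_def)
  ultimately show "(hyper_adj ((`) f ` F))\<^sup>*\<^sup>* u v" by (metis rtranclp_map)
qed

lemma hyper_connected_eq_if_card_le_1:
  assumes "hyper_connected F" "\<forall>X\<in>F. finite X \<and> card X \<le> 1" "u \<in> \<Union>F" "v \<in> \<Union>F"
  shows "u = v"
proof -
  have "(hyper_adj F)\<^sup>*\<^sup>* u v" using assms(1,3,4) unfolding hyper_connected_def by blast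
  then show ?thesis
  proof induction
    case (step y z)
    then obtain X where "X \<in> F" "y \<in> X" "z \<in> X" by (auto simp: hyper_adj_def)
    then show ?case using step.IH assms(2) by (metis One_nat_def card_le_Suc0_iff_eq)
  qed simp
qed

text \<open>Induction on the excess \<open>\<Sum>(|X| - 1)\<close>: identifying two vertices of a common hyperedge keeps
  the hypergraph connected, lowers the excess, and lowers the number of vertices by exactly one.\<close>

lemma card_Union_le_hyper_connected:
  assumes "finite F" "\<forall>X\<in>F. finite X" "hyper_connected F"
  shows "card (\<Union>F) \<le> 1 + (\<Sum>X\<in>F. card X - 1)"
  using assms
proof (induction "\<Sum>X\<in>F. card X - 1" arbitrary: F rule: less_induct)
  case less
  show ?case
  proof (cases "\<forall>X\<in>F. card X \<le> 1")
    case True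
    then have "\<forall>u\<in>\<Union>F. \<forall>v\<in>\<Union>F. u = v"
      using hyper_connected_eq_if_card_le_1[OF less.prems(3)] less.prems(2) by blast
    moreover have "finite (\<Union>F)" using less.prems(1,2) by blast
    ultimately have "card (\<Union>F) \<le> 1" by (metis One_nat_def card_le_Suc0_iff_eq)
    then show ?thesis by simp
  next
    case False
    then obtain X0 where X0: "X0 \<in> F" "card X0 > 1" by force
    have fin: "finite X0" "finite (\<Union>F)" using X0 less.prems(1,2) by auto
    obtain a b where ab: "a \<in> X0" "b \<in> X0" "a \<noteq> b"
      using X0(2) fin(1) by (metis One_nat_def card_le_Suc0_iff_eq not_le)
    define f where "f x = (if x = b then a else x)" for x
    define F' where "F' = (`) f ` F"
    have "b \<in> \<Union>F" "a \<in> \<Union>F" using ab X0 by blast+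
    moreover have "\<Union>F' = f ` \<Union>F" by (auto simp: F'_def)
    ultimately have "\<Union>F' = \<Union>F - {b}" using ab(3) by (auto simp: f_def split: if_splits)
    then have card_F': "card (\<Union>F) = card (\<Union>F') + 1"
      using card_Suc_Diff1[OF fin(2) \<open>b \<in> \<Union>F\<close>] by simp
    have "(\<Sum>Y\<in>F'. card Y - 1) \<le> (\<Sum>X\<in>F. card (f ` X) - 1)"
      unfolding F'_def using sum_image_le[OF less.prems(1), of "\<lambda>Y. card Y - 1"]
      by (simp add: o_def)
    also have "\<dots> < (\<Sum>X\<in>F. card X - 1)"
    proof (rule sum_strict_mono_ex1[OF less.prems(1)])
      show "\<forall>X\<in>F. card (f ` X) - 1 \<le> card X - 1"
        using less.prems(2) by (auto intro: diff_le_mono card_image_le)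
      have "\<not> inj_on f X0" using ab by (auto simp: inj_on_def f_def)
      then have "card (f ` X0) < card X0"
        using fin(1) card_image_le[OF fin(1), of f]
        by (metis card_image le_neq_implies_less eq_card_imp_inj_on)
      moreover have "card (f ` X0) \<ge> 1" using fin(1) ab
        by (metis One_nat_def Suc_leI card_gt_0_iff empty_iff finite_imageI image_is_empty)
      ultimately show "\<exists>X\<in>F. card (f ` X) - 1 < card X - 1" using X0 by force
    qed
    finally have excess: "(\<Sum>Y\<in>F'. card Y - 1) < (\<Sum>X\<in>F. card X - 1)" .
    have "finite F'" "\<forall>Y\<in>F'. finite Y" "hyper_connected F'"
      using less.prems hyper_connected_image unfolding F'_def by auto
    then have "card (\<Union>F') \<le> 1 + (\<Sum>Y\<in>F'. card Y - 1)" by (rule less.hyps[OF excess])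
    then show ?thesis using card_F' excess by linarith
  qed
qed

definition nondominating :: "('a \<Rightarrow> 'a \<Rightarrow> bool) \<Rightarrow> 'a set \<Rightarrow> 'a set" where
  "nondominating E X = {x\<in>X. \<exists>y\<in>X. y \<noteq> x \<and> \<not> E x y}"

definition shrink :: "('a \<Rightarrow> 'a \<Rightarrow> bool) \<Rightarrow> 'a set \<Rightarrow> 'a set" where
  "shrink E X = (if card X \<ge> 4 then X else nondominating E X)"

lemma shrink_subset: "shrink E X \<subseteq> X"
  by (auto simp: shrink_def nondominating_def)

lemma nonadj_in_shrink:
  assumes "u \<in> X" "v \<in> X" "u \<noteq> v" "\<not> E u v"
  shows "u \<in> shrink E X"
  using assms by (auto simp: shrink_def nondominating_def)

lemma induced_connected_isolated:
  assumes "induced_connected E X" "x \<in> X" "\<forall>y\<in>X. \<not> E x y" "z \<in> X"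
  shows "z = x"
proof -
  have "(\<lambda>x y. x \<in> X \<and> y \<in> X \<and> E x y)\<^sup>*\<^sup>* x z"
    using assms(1,2,4) by (simp add: induced_connected_def)
  then show ?thesis by (rule converse_rtranclpE) (use assms(3) in auto)
qed

lemma small_set_has_isolated:
  assumes "card X \<in> {2, 3}" "\<forall>x\<in>X. \<exists>y\<in>X. y \<noteq> x \<and> \<not> E x y"
    and "\<And>x y. E x y \<Longrightarrow> E y x" "\<And>x. \<not> E x x"
  shows "\<exists>x\<in>X. \<forall>y\<in>X. \<not> E x y"
  using assms(1)
proof (elim insertE emptyE)
  assume "card X = 2"
  then obtain a b where "X = {a, b}" by (auto simp: card_2_iff)
  then show ?thesis using assms(2,4) by auto
next
  assume "card X = 3"
  then obtain a b c where "X = {a, b, c}" by (auto simp: card_3_iff)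
  then show ?thesis using assms(2-4) by simp metis
qed

lemma nondominating_psubset:
  assumes "induced_connected E X" "card X \<in> {2, 3}"
    and "\<And>x y. E x y \<Longrightarrow> E y x" "\<And>x. \<not> E x x"
  shows "nondominating E X \<subset> X"
proof -
  have "X \<noteq> nondominating E X"
  proof
    assume "X = nondominating E X"
    then have "\<forall>x\<in>X. \<exists>y\<in>X. y \<noteq> x \<and> \<not> E x y" by (auto simp: nondominating_def)
    then obtain x where "x \<in> X" "\<forall>y\<in>X. \<not> E x y"
      using small_set_has_isolated assms(2-4) by blast
    then have "X = {x}" using induced_connected_isolated[OF assms(1)] by blast
    then show False using assms(2) by simp
  qed
  then show ?thesis by (auto simp: nondominating_def)
qed

lemma shrink_card_bound:
  assumes "finite X" "card X \<ge> 2" "induced_connected E X"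
    and "\<And>x y. E x y \<Longrightarrow> E y x" "\<And>x. \<not> E x x"
  shows "2 * int (card (shrink E X) - 1) \<le> 3 * (int (card X) - 2)"
proof (cases "card X \<ge> 4")
  case False
  then have "card X \<in> {2, 3}" using assms(2) by auto
  then have "shrink E X \<subset> X"
    using False assms nondominating_psubset[of E X] by (simp add: shrink_def)
  then have "card (shrink E X) < card X" by (rule psubset_card_mono[OF assms(1)])
  then show ?thesis using False assms(2) by presburger
qed (simp add: shrink_def)

lemma co_connected_path:
  assumes "co_connected V E" "u \<in> V" "v \<in> V"
  shows "(compl_adj V E)\<^sup>*\<^sup>* u v"
proof -
  have "(\<lambda>x y. x \<in> V \<and> y \<in> V \<and> compl_adj V E x y)\<^sup>*\<^sup>* u v"
    using assms by (simp add: co_connected_def connected_graph_def induced_connected_def)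
  then show ?thesis by (rule rtranclp_mono[THEN predicate2D, rotated]) auto
qed

lemma co_connected_compl_neighbour:
  assumes "co_connected V E" "finite V" "card V \<ge> 2" "v \<in> V"
  obtains w where "compl_adj V E v w"
proof -
  obtain w where "w \<in> V" "w \<noteq> v"
    using assms(2-4) by (metis card_le_Suc0_iff_eq not_less_eq_eq numeral_2_eq_2)
  then have "(compl_adj V E)\<^sup>*\<^sup>* v w" using co_connected_path assms(1,4) by metis
  then show thesis by (rule converse_rtranclpE) (use that \<open>w \<noteq> v\<close> in auto)
qed

lemma shrink_covers_compl_adj:
  assumes "connecting_hypergraph V E H" "\<And>x y. E x y \<Longrightarrow> E y x" "compl_adj V E u v"
  shows "hyper_adj (shrink E ` H) u v"
proof -
  have "\<exists>X\<in>H. u \<in> X \<and> v \<in> X"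
    using assms(1,3) unfolding connecting_hypergraph_def compl_adj_def by blast
  then obtain X where "X \<in> H" "u \<in> X" "v \<in> X" by blast
  then have "u \<in> shrink E X" "v \<in> shrink E X"
    using nonadj_in_shrink[of u X v E] nonadj_in_shrink[of v X u E] assms(2,3)
    by (auto simp: compl_adj_def)
  then show ?thesis using \<open>X \<in> H\<close> unfolding hyper_adj_def by blast
qed

lemma shrink_hypergraph_spanning_connected:
  assumes "finite V" "card V \<ge> 2" "co_connected V E" "connecting_hypergraph V E H"
    and "\<And>x y. E x y \<Longrightarrow> E y x"
  shows "\<Union>(shrink E ` H) = V" and "hyper_connected (shrink E ` H)"
proof -
  let ?F = "shrink E ` H"
  have covers: "hyper_adj ?F u v" if "compl_adj V E u v" for u v
    by (rule shrink_covers_compl_adj[OF assms(4,5) that])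
  have "\<forall>X\<in>H. X \<subseteq> V" using assms(4) unfolding connecting_hypergraph_def by blast
  then have "\<Union>?F \<subseteq> V" using shrink_subset[of E] by blast
  moreover have "V \<subseteq> \<Union>?F"
  proof
    fix v assume "v \<in> V"
    then obtain w where "compl_adj V E v w" using co_connected_compl_neighbour assms(1-3) by metis
    then show "v \<in> \<Union>?F" using covers unfolding hyper_adj_def by blast
  qed
  ultimately show UF: "\<Union>?F = V" by blast
  have "(compl_adj V E)\<^sup>*\<^sup>* \<le> (hyper_adj ?F)\<^sup>*\<^sup>*" using covers by (intro rtranclp_mono) blast
  then show "hyper_connected ?F"
    using co_connected_path[OF assms(3)] unfolding hyper_connected_def UF by blast
qed

lemma shrink_excess_le_hcost:
  assumes "simple_graph V E" "connecting_hypergraph V E H"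
  shows "2 * int (\<Sum>X\<in>H. card (shrink E X) - 1) \<le> 3 * hcost H"
proof -
  have "2 * int (\<Sum>X\<in>H. card (shrink E X) - 1) = (\<Sum>X\<in>H. 2 * int (card (shrink E X) - 1))"
    by (simp add: of_nat_sum sum_distrib_left)
  also have "\<dots> \<le> (\<Sum>X\<in>H. 3 * (int (card X) - 2))"
  proof (rule sum_mono)
    fix X assume "X \<in> H"
    then have "X \<subseteq> V" "card X \<ge> 2" "induced_connected E X"
      using assms(2) by (auto simp: connecting_hypergraph_def)
    then show "2 * int (card (shrink E X) - 1) \<le> 3 * (int (card X) - 2)"
      using assms(1)
      by (intro shrink_card_bound) (auto simp: simple_graph_def intro: rev_finite_subset)
  qed
  also have "\<dots> = 3 * hcost H" by (simp add: hcost_def sum_distrib_left)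
  finally show ?thesis .
qed

theorem mainTheorem8:
  fixes V :: "'a set" and E :: "'a \<Rightarrow> 'a \<Rightarrow> bool" and H :: "'a set set"
  assumes "simple_graph V E"
    and "card V \<ge> 2"
    and "connected_graph V E"
    and "co_connected V E"
    and "connecting_hypergraph V E H"
  shows "3 * hcost H \<ge> 2 * (int (card V) - 1)"
proof -
  have finV: "finite V" and sym: "\<And>x y. E x y \<Longrightarrow> E y x"
    using assms(1) by (auto simp: simple_graph_def)
  have "H \<subseteq> Pow V" using assms(5) by (auto simp: connecting_hypergraph_def)
  then have finH: "finite H" using finV by (simp add: finite_subset)
  note shrunk = shrink_hypergraph_spanning_connected[OF finV assms(2,4,5) sym]
  have "\<forall>Y\<in>shrink E ` H. finite Y" using shrunk(1) finV by (metis Union_upper rev_finite_subset)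
  then have "card V \<le> 1 + (\<Sum>Y\<in>shrink E ` H. card Y - 1)"
    using card_Union_le_hyper_connected[OF finite_imageI[OF finH] _ shrunk(2)]
    by (simp add: shrunk(1))
  also have "\<dots> \<le> 1 + (\<Sum>X\<in>H. card (shrink E X) - 1)"
    using sum_image_le[OF finH, of "\<lambda>Y. card Y - 1"] by (simp add: o_def)
  finally show ?thesis using shrink_excess_le_hcost[OF assms(1,5)] by presburger
qed

end
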